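(* Let $A\in\mathbb{M}_m(\mathbb{M}_n)$ be positive semidefinite. Then \[ (\mathrm{tr} A)^{mn}+\big(\det(\mathrm{tr}_1 A)\big)^m\ge m^{mn}\Big(\det A+\big(\det(\mathrm{tr}_2 A)\big)^n\Big), \] and \[ (\mathrm{tr} A)^{mn}+\big(\det(\mathrm{tr}_2 A)\big)^n\ge n^{mn}\Big(\det A+\big(\det(\mathrm{tr}_1 A)\big)^m\Big). \]
   Context: $\mathbb{M}_m(\mathbb{M}_n)$ denotes the set of $mn\times mn$ complex matrices partitioned as $A=[A_{i,j}]_{i,j=1}^m$ with each block $A_{i,j}$ an $n\times n$ complex matrix. The partial traces are $\mathrm{tr}_1 A=\sum_{i=1}^m A_{i,i}\in\mathbb{M}_n$ and $\mathrm{tr}_2 A=[\mathrm{tr}\,A_{i,j}]_{i,j=1}^m\in\mathbb{M}_m$. *)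

theory Defs
  imports "HOL-Analysis.Analysis" "HOL-Library.Complex_Order"
begin

text \<open>Block matrices in M_m(M_n) are represented as square complex matrices indexed by
  the product type 'm \<times> 'n: the entry (k,l) of block A_{i,j} is A $ (i,k) $ (j,l).\<close>

definition hermitian_mat :: "complex^'k^'k \<Rightarrow> bool" where
  "hermitian_mat A \<longleftrightarrow> (\<forall>i j. A $ i $ j = cnj (A $ j $ i))"

definition psd_mat :: "complex^'k^'k \<Rightarrow> bool" where
  "psd_mat A \<longleftrightarrow> hermitian_mat A \<and>
     (\<forall>x :: complex^'k. 0 \<le> (\<Sum>i\<in>UNIV. \<Sum>j\<in>UNIV. cnj (x $ i) * A $ i $ j * x $ j))"

text \<open>Partial traces: tr_1 A = sum of diagonal blocks (n x n), tr_2 A = [tr A_{ij}] (m x m).\<close>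

definition ptrace1 :: "complex^('m::finite \<times> 'n::finite)^('m \<times> 'n) \<Rightarrow> complex^'n^'n" where
  "ptrace1 A = (\<chi> k l. \<Sum>i\<in>UNIV. A $ (i, k) $ (i, l))"

definition ptrace2 :: "complex^('m::finite \<times> 'n::finite)^('m \<times> 'n) \<Rightarrow> complex^'m^'m" where
  "ptrace2 A = (\<chi> i j. \<Sum>k\<in>UNIV. A $ (i, k) $ (j, k))"

end

theory Submission
  imports Defs "HOL-Computational_Algebra.Fundamental_Theorem_Algebra"
begin

text \<open>
  Let \<open>S = tr\<^sub>1 A\<close> and let \<open>T = I\<^sub>m \<otimes> S\<close> be block diagonal with \<open>m\<close> copies of \<open>S\<close>.
  If \<open>S\<close> is singular, a kernel vector of \<open>S\<close> placed in any block is a kernel vector of \<open>A\<close>.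
  Otherwise every eigenvalue \<open>a\<close> of \<open>T\<^sup>-\<^sup>1 A\<close> satisfies \<open>A v = a T v\<close> for some \<open>v \<noteq> 0\<close>, so it is
  nonnegative because \<open>A\<close> is positive semidefinite and \<open>T\<close> positive definite. These \<open>mn\<close>
  eigenvalues have sum \<open>tr (S\<^sup>-\<^sup>1 tr\<^sub>1 A) = n\<close> and product \<open>det A / (det S)^m\<close>, so AM-GM gives
  \<open>m^(mn) det A \<le> (det tr\<^sub>1 A)^m\<close>. AM-GM for the eigenvalues of \<open>tr\<^sub>2 A\<close>, whose trace is \<open>tr A\<close>,
  gives \<open>m^(mn) (det tr\<^sub>2 A)^n \<le> (tr A)^(mn)\<close>, and the sum of the two is the first inequality.
  The second is the first one for \<open>A\<close> with its two tensor factors interchanged.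
\<close>

section \<open>Characteristic polynomial and eigenvalues\<close>

lemma coeff_prod_linear_factors:
  fixes r :: "'a \<Rightarrow> 'b::comm_ring_1"
  assumes "finite S"
  shows "coeff (\<Prod>i\<in>S. [:-r i, 1:]) (card S) = 1 \<and>
         (S \<noteq> {} \<longrightarrow> coeff (\<Prod>i\<in>S. [:-r i, 1:]) (card S - 1) = - (\<Sum>i\<in>S. r i))"
  using assms
proof (induction S rule: finite_induct)
  case empty
  then show ?case by simp
next
  case (insert x F)
  let ?P = "\<Prod>i\<in>F. [:-r i, 1:]"
  have split: "(\<Prod>i\<in>insert x F. [:-r i, 1:]) = smult (-r x) ?P + pCons 0 ?P"
    using insert by simp
  have "degree ?P \<le> card F"
    using degree_prod_sum_le[OF insert(1), of "\<lambda>i. [:-r i, 1:]"] by simp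
  then have top: "coeff ?P (Suc (card F)) = 0"
    by (simp add: coeff_eq_0)
  show ?case
  proof (cases "F = {}")
    case False
    then obtain c where "card F = Suc c"
      using insert(1) by (metis card_0_eq not0_implies_Suc)
    then show ?thesis using insert top split False by (simp add: algebra_simps)
  qed (use insert in simp)
qed

definition charpoly :: "'a::comm_ring_1^'n^'n \<Rightarrow> 'a poly" where
  "charpoly M = det (\<chi> i j. if i = j then [:-M$i$j, 1:] else [:-M$i$j:])"

lemma poly_charpoly: "poly (charpoly M) x = det (mat x - M)"
  unfolding charpoly_def det_def poly_sum
  by (intro sum.cong refl)
    (simp only: poly_prod poly_mult poly_of_int; intro arg_cong2[where f="(*)"] refl prod.cong;
     simp add: mat_def)

lemma card_fixpoints_le_if_not_id:
  assumes p: "p permutes (UNIV::'n::finite set)" and "p \<noteq> id"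
  shows "card {i. p i = i} + 2 \<le> CARD('n)"
proof -
  from assms(2) obtain a where a: "p a \<noteq> a" by (auto simp: fun_eq_iff)
  have "p (p a) \<noteq> p a"
    using a permutes_inj[OF p] by (auto dest: injD)
  then have "{a, p a} \<subseteq> UNIV - {i. p i = i}" using a by auto
  then have "2 \<le> card (UNIV - {i. p i = i})"
    using a card_mono[of "UNIV - {i. p i = i}" "{a, p a}"] by simp
  moreover have "card (UNIV - {i. p i = i}) = CARD('n) - card {i. p i = i}"
    by (rule card_Diff_subset) auto
  moreover have "card {i. p i = i} \<le> CARD('n)" by (rule card_mono) auto
  ultimately show ?thesis by linarith
qed

text \<open>Only the identity permutation contributes to the two top coefficients.\<close>

lemma charpoly_eq_diagonal_plus_low_degree:
  fixes M :: "'a::comm_ring_1^'n::finite^'n"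
  obtains R where "charpoly M = (\<Prod>i\<in>UNIV. [:-M$i$i, 1:]) + R"
    and "\<And>k. CARD('n) \<le> k + 1 \<Longrightarrow> coeff R k = 0"
proof -
  let ?C = "(\<chi> i j. if i = j then [:-M$i$j, 1:] else [:-M$i$j:]) :: 'a poly^'n^'n"
  let ?t = "\<lambda>p. of_int (sign p) * (\<Prod>i\<in>UNIV. ?C$i$p i)"
  let ?P = "{p. p permutes (UNIV::'n set)}"
  have split: "charpoly M = ?t id + (\<Sum>p\<in>?P - {id}. ?t p)"
    unfolding charpoly_def det_def
    using sum.remove[of ?P id ?t] by (simp add: finite_permutations permutes_id)
  have diag: "?t id = (\<Prod>i\<in>UNIV. [:-M$i$i, 1:])" by simp
  have low: "coeff (\<Sum>p\<in>?P - {id}. ?t p) k = 0" if "CARD('n) \<le> k + 1" for k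
  proof -
    have "degree (?t p) + 2 \<le> CARD('n)" if "p \<in> ?P - {id}" for p
    proof -
      have "degree (?t p) \<le> (\<Sum>i\<in>UNIV. degree (?C$i$p i))"
        using degree_mult_le[of "of_int (sign p)" "\<Prod>i\<in>UNIV. ?C$i$p i"]
          degree_prod_sum_le[of UNIV "\<lambda>i. ?C$i$p i"] by (simp add: o_def)
      also have "\<dots> = (\<Sum>i\<in>UNIV. if p i = i then 1 else 0)"
        by (intro sum.cong) auto
      also have "\<dots> = card {i. p i = i}"
        by (simp add: sum.If_cases)
      finally show ?thesis using card_fixpoints_le_if_not_id[of p] that by simp
    qed
    then show ?thesis
      unfolding coeff_sum using that by (intro sum.neutral ballI coeff_eq_0) fastforce
  qed
  show ?thesis
    using that[of "\<Sum>p\<in>?P - {id}. ?t p"] split diag low by simp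
qed

lemma
  fixes M :: "'a::comm_ring_1^'n::finite^'n"
  shows coeff_charpoly_card: "coeff (charpoly M) CARD('n) = 1"
    and coeff_charpoly_card_minus_1: "coeff (charpoly M) (CARD('n) - 1) = - trace M"
    and degree_charpoly: "degree (charpoly M) = CARD('n)"
proof -
  obtain R where cp: "charpoly M = (\<Prod>i\<in>UNIV. [:-M$i$i, 1:]) + R"
    and R: "\<And>k. CARD('n) \<le> k + 1 \<Longrightarrow> coeff R k = 0"
    using charpoly_eq_diagonal_plus_low_degree[of M] by blast
  have diag: "coeff (\<Prod>i\<in>UNIV. [:-M$i$i, 1:]) CARD('n) = 1"
    "coeff (\<Prod>i\<in>UNIV. [:-M$i$i, 1:]) (CARD('n) - 1) = - trace M"
    using coeff_prod_linear_factors[of "UNIV::'n set" "\<lambda>i. M$i$i"] by (simp_all add: trace_def)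
  show top: "coeff (charpoly M) CARD('n) = 1"
    using diag R[of "CARD('n)"] by (simp add: cp)
  show "coeff (charpoly M) (CARD('n) - 1) = - trace M"
    using diag R[of "CARD('n) - 1"] by (simp add: cp)
  have "degree (\<Prod>i\<in>UNIV. [:-M$i$i, 1:]) \<le> CARD('n)"
    using degree_prod_sum_le[of UNIV "\<lambda>i. [:-M$i$i, 1:]"] by simp
  then have "coeff (charpoly M) k = 0" if "CARD('n) < k" for k
    using that R[of k] by (simp add: cp coeff_eq_0)
  then have "degree (charpoly M) \<le> CARD('n)" by (simp add: degree_le)
  then show "degree (charpoly M) = CARD('n)"
    using le_degree[of "charpoly M" "CARD('n)"] top by simp
qed

lemma det_uminus: "det (- M) = (-1) ^ CARD('n) * det (M::'a::comm_ring_1^'n::finite^'n)"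
  unfolding det_def by (simp add: prod_uminus sum_distrib_left mult_ac)

lemma det_eq_0_iff_kernel:
  fixes A :: "'a::field^'n::finite^'n"
  shows "det A = 0 \<longleftrightarrow> (\<exists>x. x \<noteq> 0 \<and> A *v x = 0)"
  using invertible_det_nz[of A] invertible_left_inverse[of A] matrix_left_invertible_ker[of A]
  by blast

lemma mat_mult_vector: "mat c *v x = c *s (x :: 'a::comm_ring_1^'n::finite)"
  by (simp add: vec_eq_iff matrix_vector_mult_def mat_def if_distrib[of "\<lambda>a. a * _"] cong: if_cong)

lemma complex_matrix_eigenvalues:
  fixes M :: "complex^'n::finite^'n"
  obtains r where "det M = (\<Prod>i<CARD('n). r i)" "trace M = (\<Sum>i<CARD('n). r i)"
    "\<And>i. i < CARD('n) \<Longrightarrow> \<exists>v. v \<noteq> 0 \<and> M *v v = r i *s v"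
proof -
  let ?p = "charpoly M" and ?N = "CARD('n)"
  obtain r where "smult (lead_coeff ?p) (\<Prod>i<degree ?p. [:-r i, 1:]) = ?p"
    by (rule complex_poly_decompose')
  then have p: "?p = (\<Prod>i<?N. [:-r i, 1:])"
    by (simp add: degree_charpoly coeff_charpoly_card)
  have "(-1) ^ ?N * det M = poly ?p 0"
    by (simp add: poly_charpoly det_uminus)
  also have "\<dots> = (-1) ^ ?N * (\<Prod>i<?N. r i)"
    unfolding p poly_prod by (simp add: prod_uminus)
  finally have "det M = (\<Prod>i<?N. r i)" by simp
  moreover have "trace M = (\<Sum>i<?N. r i)"
    using coeff_charpoly_card_minus_1[of M] coeff_prod_linear_factors[of "{..<?N}" r]
    by (simp add: p lessThan_empty_iff)
  moreover have "\<exists>v. v \<noteq> 0 \<and> M *v v = r i *s v" if "i < ?N" for i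
  proof -
    have "det (mat (r i) - M) = 0"
      using that by (simp add: poly_charpoly[symmetric] p poly_prod prod_zero_iff) blast
    then obtain v where "v \<noteq> 0" "(mat (r i) - M) *v v = 0"
      using det_eq_0_iff_kernel by blast
    then show ?thesis
      by (auto simp: matrix_vector_mult_diff_rdistrib mat_mult_vector)
  qed
  ultimately show ?thesis using that by blast
qed

lemma amgm_power:
  fixes x :: "nat \<Rightarrow> real"
  assumes "N > 0" "\<And>i. i < N \<Longrightarrow> 0 \<le> x i"
  shows "real N ^ N * (\<Prod>i<N. x i) \<le> (\<Sum>i<N. x i) ^ N"
proof -
  have prod_nonneg: "0 \<le> (\<Prod>i<N. x i)" using assms by (auto intro: prod_nonneg)
  have "root N (\<Prod>i<N. x i) \<le> (\<Sum>i<N. x i / N)"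
    using arith_geom_mean[of "{..<N}" x] assms prod_nonneg
    by (simp add: root_powr_inverse lessThan_empty_iff)
  then have "(\<Prod>i<N. x i) \<le> ((\<Sum>i<N. x i) / N) ^ N"
    using power_mono[of "root N (\<Prod>i<N. x i)" _ N] prod_nonneg assms(1)
    by (simp add: sum_divide_distrib real_root_pow_pos2)
  then show ?thesis
    using assms(1) by (simp add: power_divide field_simps)
qed

lemma nonneg_eigenvalues_amgm:
  fixes M :: "complex^'n::finite^'n"
  assumes "\<And>a v. v \<noteq> 0 \<Longrightarrow> M *v v = a *s v \<Longrightarrow> 0 \<le> a"
  obtains d t :: real where "det M = of_real d" "trace M = of_real t" "0 \<le> d" "0 \<le> t"
    "real CARD('n) ^ CARD('n) * d \<le> t ^ CARD('n)"
proof -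
  obtain r where r: "det M = (\<Prod>i<CARD('n). r i)" "trace M = (\<Sum>i<CARD('n). r i)"
    "\<And>i. i < CARD('n) \<Longrightarrow> \<exists>v. v \<noteq> 0 \<and> M *v v = r i *s v"
    using complex_matrix_eigenvalues[of M] by blast
  have "0 \<le> r i" if "i < CARD('n)" for i
    using r(3)[OF that] assms by blast
  then have r_real: "r i = of_real (Re (r i))" "0 \<le> Re (r i)" if "i < CARD('n)" for i
    using that by (auto simp: less_eq_complex_def complex_eq_iff)
  show ?thesis
  proof (rule that)
    show "det M = of_real (\<Prod>i<CARD('n). Re (r i))"
      unfolding r(1) of_real_prod using r_real by (intro prod.cong) auto
    show "trace M = of_real (\<Sum>i<CARD('n). Re (r i))"
      unfolding r(2) of_real_sum using r_real by (intro sum.cong) auto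
  qed (use r_real amgm_power[of "CARD('n)" "\<lambda>i. Re (r i)"] in \<open>auto intro: prod_nonneg sum_nonneg\<close>)
qed

section \<open>Positive semidefinite matrices\<close>

definition sesq :: "complex^'n^'n \<Rightarrow> complex^'n \<Rightarrow> complex^'n \<Rightarrow> complex" where
  "sesq B x y = (\<Sum>i\<in>UNIV. \<Sum>j\<in>UNIV. cnj (x$i) * B$i$j * y$j)"

lemma psd_mat_iff_sesq: "psd_mat B \<longleftrightarrow> hermitian_mat B \<and> (\<forall>x. 0 \<le> sesq B x x)"
  unfolding psd_mat_def sesq_def by simp

lemma sesq_eq_sum_mult_vector: "sesq B x y = (\<Sum>i\<in>UNIV. cnj (x$i) * (B *v y)$i)"
  unfolding sesq_def matrix_vector_mult_def by (simp add: sum_distrib_left mult.assoc)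

lemma sesq_diff_scale:
  "sesq B (v - c *s w) (v - c *s w) =
     sesq B v v - cnj c * sesq B w v - c * sesq B v w + cnj c * c * sesq B w w"
  unfolding sesq_def
  by (simp add: algebra_simps sum_subtractf sum.distrib sum_distrib_left)

lemma hermitian_sesq_swap:
  assumes "hermitian_mat B"
  shows "sesq B v w = cnj (sesq B w v)"
proof -
  have cnj_B: "cnj (B$i$j) = B$j$i" for i j
    using assms unfolding hermitian_mat_def by (metis complex_cnj_cnj)
  have "cnj (sesq B w v) = (\<Sum>i\<in>UNIV. \<Sum>j\<in>UNIV. w$i * B$j$i * cnj (v$j))"
    unfolding sesq_def by (simp add: cnj_sum cnj_B)
  also have "\<dots> = (\<Sum>j\<in>UNIV. \<Sum>i\<in>UNIV. w$i * B$j$i * cnj (v$j))"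
    by (rule sum.swap)
  also have "\<dots> = sesq B v w"
    unfolding sesq_def by (simp add: mult_ac)
  finally show ?thesis by simp
qed

lemma sesq_mat_1: "sesq (mat 1) w w = of_real (\<Sum>i\<in>UNIV. (cmod (w$i))\<^sup>2)"
  unfolding sesq_eq_sum_mult_vector of_real_sum matrix_vector_mul_lid
  by (intro sum.cong refl) (metis complex_norm_square mult.commute)

lemma sum_cmod_squares_eq_0_iff: "(\<Sum>i\<in>UNIV. (cmod (w$i))\<^sup>2) = 0 \<longleftrightarrow> w = (0::complex^'n::finite)"
  by (subst sum_nonneg_eq_0_iff) (auto simp: vec_eq_iff)

text \<open>The quadratic form, evaluated at \<open>v - t B v\<close> for small \<open>t > 0\<close>, would become negative
  unless \<open>B v = 0\<close>.\<close>

lemma psd_sesq_eq_0_imp_kernel: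
  assumes psd: "psd_mat B" and zero: "sesq B v v = 0"
  shows "B *v v = 0"
proof -
  let ?w = "B *v v"
  have herm: "hermitian_mat B" and nonneg: "\<And>x. 0 \<le> sesq B x x"
    using psd by (auto simp: psd_mat_iff_sesq)
  define s where "s = (\<Sum>i\<in>UNIV. (cmod (?w$i))\<^sup>2)"
  have "s \<ge> 0" unfolding s_def by (simp add: sum_nonneg)
  have wv: "sesq B ?w v = of_real s"
    unfolding s_def sesq_mat_1[symmetric] sesq_eq_sum_mult_vector matrix_vector_mul_lid ..
  have vw: "sesq B v ?w = of_real s"
    using hermitian_sesq_swap[OF herm, of v ?w] wv by simp
  obtain q where q: "sesq B ?w ?w = of_real q" "0 \<le> q"
    using nonneg[of ?w]
    by (metis complex_is_Real_iff less_eq_complex_def of_real_Re zero_complex.simps(1,2))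
  have "s = 0"
  proof (rule ccontr)
    assume "s \<noteq> 0"
    with \<open>s \<ge> 0\<close> have "0 < s" by simp
    define t where "t = s / (q + 1)"
    have "t * q = s * (q / (q + 1))" unfolding t_def by simp
    also have "\<dots> < s * 2"
      using \<open>0 < s\<close> q(2) by (intro mult_strict_left_mono) (auto simp: field_simps)
    finally have "t * q < 2 * s" by simp
    moreover have "0 < t" unfolding t_def using \<open>0 < s\<close> q(2) by simp
    ultimately have "t * (t * q) < t * (2 * s)" by (rule mult_strict_left_mono)
    then have "- 2 * t * s + t * t * q < 0"
      by (simp add: algebra_simps)
    moreover have "sesq B (v - of_real t *s ?w) (v - of_real t *s ?w) = of_real (- 2 * t * s + t * t * q)"
      unfolding sesq_diff_scale zero wv vw q(1) by simp
    ultimately show False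
      using nonneg[of "v - of_real t *s ?w"] by (simp add: less_eq_complex_def)
  qed
  then show ?thesis
    unfolding s_def sum_cmod_squares_eq_0_iff .
qed

lemma generalized_eigenvalue_nonneg:
  assumes "0 \<le> sesq A v v" "0 < sesq T v v" "A *v v = a *s (T *v v)"
  shows "0 \<le> a"
proof -
  have eq: "sesq A v v = a * sesq T v v"
    unfolding sesq_eq_sum_mult_vector assms(3) by (simp add: sum_distrib_left mult_ac)
  have T: "0 < Re (sesq T v v)" "Im (sesq T v v) = 0"
    using assms(2) by (simp_all add: less_complex_def)
  have "0 \<le> Re a * Re (sesq T v v)" "Im a * Re (sesq T v v) = 0"
    using assms(1) T(2) unfolding eq by (simp_all add: less_eq_complex_def)
  then show ?thesis
    using T(1) by (simp add: less_eq_complex_def zero_le_mult_iff)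
qed

lemma psd_eigenvalue_nonneg:
  assumes "psd_mat B" "v \<noteq> 0" "B *v v = a *s v"
  shows "0 \<le> a"
proof (rule generalized_eigenvalue_nonneg)
  show "0 \<le> sesq B v v" using assms(1) by (simp add: psd_mat_iff_sesq)
  have "(\<Sum>i\<in>UNIV. (cmod (v$i))\<^sup>2) > 0"
    using assms(2) sum_cmod_squares_eq_0_iff[of v] by (simp add: order_less_le sum_nonneg)
  then show "0 < sesq (mat 1) v v" by (simp add: sesq_mat_1 less_complex_def)
  show "B *v v = a *s (mat 1 *v v)" using assms(3) by simp
qed

lemma psd_det_trace_amgm:
  fixes B :: "complex^'n::finite^'n"
  assumes "psd_mat B"
  obtains d t :: real where "det B = of_real d" "trace B = of_real t" "0 \<le> d" "0 \<le> t"
    "real CARD('n) ^ CARD('n) * d \<le> t ^ CARD('n)"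
proof (rule nonneg_eigenvalues_amgm)
  show "\<And>a v. v \<noteq> 0 \<Longrightarrow> B *v v = a *s v \<Longrightarrow> 0 \<le> a"
    using psd_eigenvalue_nonneg[OF assms] .
qed (rule that)

section \<open>Block-diagonal matrices and partial traces\<close>

definition block_diag :: "('m \<Rightarrow> 'a^'n^'n) \<Rightarrow> 'a::zero^('m::finite \<times> 'n::finite)^('m \<times> 'n)" where
  "block_diag B = (\<chi> x y. if fst x = fst y then B (fst x) $ snd x $ snd y else 0)"

definition block :: "'a^('m::finite \<times> 'n::finite) \<Rightarrow> 'm \<Rightarrow> 'a^'n" where
  "block v i = (\<chi> k. v $ (i, k))"

definition embed_block :: "'m \<Rightarrow> 'a^'n \<Rightarrow> 'a::zero^('m::finite \<times> 'n::finite)" where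
  "embed_block i w = (\<chi> x. if fst x = i then w $ snd x else 0)"

lemma sum_UNIV_pair:
  "(\<Sum>z\<in>(UNIV::('a::finite \<times> 'b::finite) set). f z) = (\<Sum>i\<in>UNIV. \<Sum>k\<in>UNIV. f (i, k))"
  unfolding sum.cartesian_product UNIV_Times_UNIV by (simp add: split_def)

lemma sum_if_fst_eq:
  "(\<Sum>z\<in>(UNIV::('a::finite \<times> 'b::finite) set). if fst z = i then f (snd z) else 0) = (\<Sum>k\<in>UNIV. f k)"
  unfolding sum_UNIV_pair by (subst sum.swap) simp

lemma block_diag_mult:
  fixes B C :: "'m::finite \<Rightarrow> 'a::semiring_1^'n::finite^'n"
  shows "block_diag B ** block_diag C = block_diag (\<lambda>i. B i ** C i)"
proof -
  have "(block_diag B ** block_diag C) $ x $ y = block_diag (\<lambda>i. B i ** C i) $ x $ y" for x y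
  proof -
    have "(block_diag B ** block_diag C) $ x $ y
        = (\<Sum>z\<in>UNIV. if fst z = fst x then
             B (fst x) $ snd x $ snd z * (if fst x = fst y then C (fst x) $ snd z $ snd y else 0)
           else 0)"
      unfolding matrix_matrix_mult_def block_diag_def by (auto intro!: sum.cong)
    also have "\<dots> = (\<Sum>k\<in>UNIV. B (fst x) $ snd x $ k * (if fst x = fst y then C (fst x) $ k $ snd y else 0))"
      by (rule sum_if_fst_eq)
    also have "\<dots> = block_diag (\<lambda>i. B i ** C i) $ x $ y"
      by (simp add: block_diag_def matrix_matrix_mult_def)
    finally show ?thesis .
  qed
  then show ?thesis by (simp add: vec_eq_iff)
qed

lemma block_diag_mat_1: "block_diag (\<lambda>_. mat 1) = (mat 1 :: 'a::zero_neq_one^('m::finite \<times> 'n::finite)^('m \<times> 'n))"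
  by (auto simp: block_diag_def vec_eq_iff mat_def prod_eq_iff)

lemma map_permutation_Pair:
  "map_permutation UNIV (Pair i) q x = (if fst x = i then (i, q (snd x)) else x)"
proof -
  have inv: "inv_into UNIV (Pair i) (i, k) = k" for k
    by (meson Pair_inject inj_onI inv_into_f_f iso_tuple_UNIV_I)
  show ?thesis
    by (cases x) (auto simp: map_permutation_def restrict_id_def inv)
qed

lemma block_diag_single_nonzero_term:
  fixes S :: "'a::comm_ring_1^'n::finite^'n"
  assumes p: "p permutes (UNIV :: ('m::finite \<times> 'n) set)"
    and nonzero: "(\<Prod>x\<in>UNIV. block_diag ((\<lambda>_. mat 1)(i := S)) $ x $ p x) \<noteq> 0"
  shows "p \<in> map_permutation UNIV (Pair i) ` {q. q permutes UNIV}"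
proof -
  let ?E = "block_diag ((\<lambda>_. mat 1)(i := S)) :: 'a^('m \<times> 'n)^('m \<times> 'n)"
  have entry: "?E $ x $ p x \<noteq> 0" for x
  proof
    assume "?E $ x $ p x = 0"
    then have "(\<Prod>x\<in>UNIV. ?E $ x $ p x) = 0" by (intro prod_zero) (simp, blast)
    with nonzero show False by simp
  qed
  have other: "p x = x" if "fst x \<noteq> i" for x
    using entry[of x] that by (cases x, cases "p x") (auto simp: block_diag_def mat_def split: if_split_asm)
  have same: "fst (p x) = i" if "fst x = i" for x
    using entry[of x] that by (auto simp: block_diag_def split: if_split_asm)
  define q where "q k = snd (p (i, k))" for k
  have p_eq: "p = map_permutation UNIV (Pair i) q"
    using other same by (auto simp: fun_eq_iff map_permutation_Pair q_def prod_eq_iff)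
  have "inj q"
  proof
    fix k k' assume "q k = q k'"
    then have "p (i, k) = p (i, k')" by (simp add: p_eq map_permutation_Pair)
    then show "k = k'" using permutes_inj[OF p] by (auto dest: injD)
  qed
  then have "q permutes UNIV"
    by (simp add: finite_UNIV_inj_surj bij_def permutes_altdef)
  then show ?thesis using p_eq by blast
qed

lemma det_block_diag_single:
  fixes S :: "'a::comm_ring_1^'n::finite^'n"
  shows "det (block_diag ((\<lambda>_. mat 1)(i := S)) :: 'a^('m::finite \<times> 'n)^('m \<times> 'n)) = det S"
proof -
  let ?E = "block_diag ((\<lambda>_. mat 1)(i := S)) :: 'a^('m \<times> 'n)^('m \<times> 'n)"
  let ?L = "map_permutation UNIV (Pair i) :: ('n \<Rightarrow> 'n) \<Rightarrow> _"
  let ?f = "\<lambda>p. of_int (sign p) * (\<Prod>x\<in>UNIV. ?E $ x $ p x)"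
  let ?P = "{p. p permutes (UNIV :: ('m \<times> 'n) set)}" and ?Q = "{q. q permutes (UNIV :: 'n set)}"
  have inj_Pair: "inj_on (Pair i) UNIV" by (simp add: inj_on_def)
  have lift: "?L q permutes UNIV" if "q permutes UNIV" for q
    using map_permutation_permutes[OF inj_on_imp_bij_betw[OF inj_Pair] that]
    by (rule permutes_subset) simp
  have "det ?E = sum ?f ?P" unfolding det_def by simp
  also have "\<dots> = sum ?f (?L ` ?Q)"
  proof (rule sum.mono_neutral_right)
    show "\<forall>p\<in>?P - ?L ` ?Q. ?f p = 0"
      using block_diag_single_nonzero_term[of _ i S] by fastforce
  qed (use lift in \<open>auto simp: finite_permutations\<close>)
  also have "\<dots> = sum (?f \<circ> ?L) ?Q"
  proof (rule sum.reindex, rule inj_onI)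
    fix q q' assume "?L q = ?L q'"
    then have "?L q (i, k) = ?L q' (i, k)" for k by simp
    then show "q = q'" by (simp add: fun_eq_iff map_permutation_Pair)
  qed
  also have "\<dots> = det S" unfolding det_def
  proof (intro sum.cong refl)
    fix q assume "q \<in> ?Q"
    then have sign: "sign (?L q) = sign q" by (simp add: sign_map_permutation inj_Pair)
    have "(\<Prod>x\<in>UNIV. ?E $ x $ ?L q x) = (\<Prod>j\<in>UNIV. \<Prod>k\<in>UNIV. ?E $ (j, k) $ ?L q (j, k))"
      unfolding prod.cartesian_product UNIV_Times_UNIV by (simp add: split_def)
    also have "\<dots> = (\<Prod>j\<in>UNIV. if j = i then (\<Prod>k\<in>UNIV. S $ k $ q k) else 1)"
      by (intro prod.cong refl) (auto simp: block_diag_def map_permutation_Pair mat_def)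
    finally show "(?f \<circ> ?L) q = of_int (sign q) * (\<Prod>k\<in>UNIV. S $ k $ q k)"
      using sign by simp
  qed
  finally show ?thesis .
qed

lemma det_block_diag:
  fixes B :: "'m::finite \<Rightarrow> 'a::comm_ring_1^'n::finite^'n"
  shows "det (block_diag B) = (\<Prod>i\<in>UNIV. det (B i))"
proof -
  have "det (block_diag (\<lambda>j. if j \<in> F then B j else mat 1)) = (\<Prod>i\<in>F. det (B i))" for F
  proof (induction F rule: infinite_finite_induct)
    case (insert i F)
    have "block_diag (\<lambda>j. if j \<in> insert i F then B j else mat 1)
        = block_diag ((\<lambda>_. mat 1)(i := B i)) ** block_diag (\<lambda>j. if j \<in> F then B j else mat 1)"
      using insert(2) by (auto simp: block_diag_mult intro!: arg_cong[where f=block_diag])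
    then show ?case
      using insert by (simp add: det_mul det_block_diag_single)
  qed (simp_all add: block_diag_mat_1)
  from this[of UNIV] show ?thesis by simp
qed

lemma sesq_block_diag:
  "sesq (block_diag B) v v = (\<Sum>i\<in>UNIV. sesq (B i) (block v i) (block v i))"
proof -
  have "sesq (block_diag B) v v = (\<Sum>x\<in>UNIV. \<Sum>l\<in>UNIV. cnj (v$x) * B (fst x) $ snd x $ l * v $ (fst x, l))"
    unfolding sesq_def
  proof (intro sum.cong refl)
    fix x :: "'a \<times> 'b"
    have "(\<Sum>y\<in>UNIV. cnj (v$x) * block_diag B $ x $ y * v $ y)
        = (\<Sum>y\<in>UNIV. if fst y = fst x then cnj (v$x) * B (fst x) $ snd x $ snd y * v $ (fst x, snd y) else 0)"
      unfolding block_diag_def by (intro sum.cong) auto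
    also have "\<dots> = (\<Sum>l\<in>UNIV. cnj (v$x) * B (fst x) $ snd x $ l * v $ (fst x, l))"
      by (rule sum_if_fst_eq)
    finally show "(\<Sum>y\<in>UNIV. cnj (v$x) * block_diag B $ x $ y * v $ y) = \<dots>" .
  qed
  also have "\<dots> = (\<Sum>i\<in>UNIV. sesq (B i) (block v i) (block v i))"
    unfolding sum_UNIV_pair sesq_def block_def by simp
  finally show ?thesis .
qed

lemma trace_block_diag_mult:
  fixes A :: "complex^('m::finite \<times> 'n::finite)^('m \<times> 'n)"
  shows "trace (block_diag (\<lambda>_. S) ** A) = trace (S ** ptrace1 A)"
proof -
  have "trace (block_diag (\<lambda>_. S) ** A) = (\<Sum>x\<in>UNIV. \<Sum>l\<in>UNIV. S $ snd x $ l * A $ (fst x, l) $ x)"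
    unfolding trace_def
  proof (intro sum.cong refl)
    fix x :: "'m \<times> 'n"
    have "(block_diag (\<lambda>_. S) ** A) $ x $ x
        = (\<Sum>z\<in>UNIV. if fst z = fst x then S $ snd x $ snd z * A $ (fst x, snd z) $ x else 0)"
      unfolding matrix_matrix_mult_def block_diag_def by (auto intro!: sum.cong)
    also have "\<dots> = (\<Sum>l\<in>UNIV. S $ snd x $ l * A $ (fst x, l) $ x)"
      by (rule sum_if_fst_eq)
    finally show "(block_diag (\<lambda>_. S) ** A) $ x $ x = \<dots>" .
  qed
  also have "\<dots> = (\<Sum>i\<in>UNIV. \<Sum>k\<in>UNIV. \<Sum>l\<in>UNIV. S $ k $ l * A $ (i, l) $ (i, k))"
    unfolding sum_UNIV_pair by simp
  also have "\<dots> = (\<Sum>k\<in>UNIV. \<Sum>l\<in>UNIV. \<Sum>i\<in>UNIV. S $ k $ l * A $ (i, l) $ (i, k))"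
    by (subst sum.swap) (intro sum.cong refl sum.swap)
  also have "\<dots> = trace (S ** ptrace1 A)"
    unfolding trace_def matrix_matrix_mult_def ptrace1_def by (simp add: sum_distrib_left)
  finally show ?thesis .
qed

lemma trace_ptrace1: "trace (ptrace1 A) = trace A"
  using trace_block_diag_mult[of "mat 1" A] by (simp add: block_diag_mat_1)

lemma sesq_embed_block:
  "sesq A (embed_block i v) (embed_block i v) = (\<Sum>k\<in>UNIV. \<Sum>l\<in>UNIV. cnj (v$k) * A $ (i, k) $ (i, l) * v $ l)"
proof -
  have "sesq A (embed_block i v) (embed_block i v)
      = (\<Sum>x\<in>UNIV. if fst x = i then (\<Sum>l\<in>UNIV. cnj (v $ snd x) * A $ (i, snd x) $ (i, l) * v $ l) else 0)"
    unfolding sesq_def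
  proof (intro sum.cong refl)
    fix x :: "'a \<times> 'b"
    have "(\<Sum>y\<in>UNIV. cnj (embed_block i v $ x) * A $ x $ y * embed_block i v $ y)
        = (\<Sum>y\<in>UNIV. if fst y = i then cnj (embed_block i v $ x) * A $ x $ (i, snd y) * v $ snd y else 0)"
      unfolding embed_block_def by (intro sum.cong) auto
    also have "\<dots> = (\<Sum>l\<in>UNIV. cnj (embed_block i v $ x) * A $ x $ (i, l) * v $ l)"
      by (rule sum_if_fst_eq)
    finally show "(\<Sum>y\<in>UNIV. cnj (embed_block i v $ x) * A $ x $ y * embed_block i v $ y) =
        (if fst x = i then (\<Sum>l\<in>UNIV. cnj (v $ snd x) * A $ (i, snd x) $ (i, l) * v $ l) else 0)"
      by (cases x) (auto simp: embed_block_def)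
  qed
  also have "\<dots> = (\<Sum>k\<in>UNIV. \<Sum>l\<in>UNIV. cnj (v$k) * A $ (i, k) $ (i, l) * v $ l)"
    by (rule sum_if_fst_eq)
  finally show ?thesis .
qed

lemma sesq_ptrace1:
  "sesq (ptrace1 A) v v = (\<Sum>i\<in>UNIV. sesq A (embed_block i v) (embed_block i v))"
proof -
  have "(\<Sum>i\<in>UNIV. sesq A (embed_block i v) (embed_block i v))
      = (\<Sum>k\<in>UNIV. \<Sum>l\<in>UNIV. \<Sum>i\<in>UNIV. cnj (v$k) * A $ (i, k) $ (i, l) * v $ l)"
    unfolding sesq_embed_block by (subst sum.swap) (intro sum.cong refl sum.swap)
  also have "\<dots> = sesq (ptrace1 A) v v"
    unfolding sesq_def ptrace1_def by (simp add: sum_distrib_left sum_distrib_right)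
  finally show ?thesis by simp
qed

lemma psd_ptrace1:
  assumes "psd_mat A"
  shows "psd_mat (ptrace1 A)"
proof -
  have "cnj (A$x$y) = A$y$x" for x y
    using assms unfolding psd_mat_def hermitian_mat_def by (metis complex_cnj_cnj)
  then have "hermitian_mat (ptrace1 A)"
    unfolding hermitian_mat_def ptrace1_def by (simp add: cnj_sum)
  moreover have "0 \<le> sesq (ptrace1 A) x x" for x
    unfolding sesq_ptrace1 using assms by (intro sum_nonneg) (simp add: psd_mat_iff_sesq)
  ultimately show ?thesis by (simp add: psd_mat_iff_sesq)
qed

lemma embed_block_eq_0_iff: "embed_block i v = 0 \<longleftrightarrow> v = 0"
  unfolding embed_block_def by (auto simp: vec_eq_iff)

lemma block_eq_0_iff: "(\<forall>i. block v i = 0) \<longleftrightarrow> v = 0"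
  unfolding block_def by (auto simp: vec_eq_iff)

section \<open>Interchanging the tensor factors\<close>

definition reindex_mat :: "('l \<Rightarrow> 'k) \<Rightarrow> 'a^'k^'k \<Rightarrow> 'a^'l^'l" where
  "reindex_mat e A = (\<chi> x y. A $ e x $ e y)"

lemma det_reindex_mat:
  fixes A :: "'a::comm_ring_1^'k::finite^'k" and e :: "'l::finite \<Rightarrow> 'k"
  assumes "bij e"
  shows "det (reindex_mat e A) = det A"
proof -
  let ?P = "{p. p permutes (UNIV :: 'l set)}" and ?Q = "{q. q permutes (UNIV :: 'k set)}"
  have conj_eq: "map_permutation UNIV e p = e \<circ> p \<circ> inv e" for p
    using assms by (simp add: map_permutation_def restrict_id_def bij_is_surj fun_eq_iff)
  have conj_permutes: "e \<circ> p \<circ> inv e \<in> ?Q" if "p \<in> ?P" for p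
    using map_permutation_permutes[of e UNIV UNIV p] assms that
    by (simp add: conj_eq bij_betw_def bij_is_surj)
  have conj_inv_permutes: "inv e \<circ> q \<circ> e \<in> ?P" if "q \<in> ?Q" for q
    using that assms by (auto simp: permutes_altdef intro!: bij_comp bij_imp_bij_inv)
  have "(\<Prod>y\<in>UNIV. A $ y $ (e \<circ> p \<circ> inv e) y) = (\<Prod>x\<in>UNIV. A $ e x $ e (p x))" for p
    using prod.reindex_bij_betw[of e UNIV UNIV "\<lambda>y. A $ y $ (e \<circ> p \<circ> inv e) y"] assms
    by (simp add: bij_betw_def bij_is_inj)
  moreover have "sign (e \<circ> p \<circ> inv e) = sign p" if "p \<in> ?P" for p
    using sign_map_permutation[of e UNIV p] assms that by (simp add: conj_eq bij_is_inj)
  ultimately show ?thesis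
    unfolding det_def reindex_mat_def
    using assms conj_permutes conj_inv_permutes
    by (intro sum.reindex_bij_witness[of _ "\<lambda>q. inv e \<circ> q \<circ> e" "\<lambda>p. e \<circ> p \<circ> inv e"])
      (auto simp: fun_eq_iff bij_inv_eq_iff bij_is_inj surj_f_inv_f bij_is_surj)
qed

lemma trace_reindex_mat:
  assumes "bij e"
  shows "trace (reindex_mat e A) = trace A"
  unfolding trace_def reindex_mat_def
  using sum.reindex_bij_betw[of e UNIV UNIV "\<lambda>y. A $ y $ y"] assms by (simp add: bij_betw_def)

lemma psd_reindex_mat:
  assumes "bij e" "psd_mat A"
  shows "psd_mat (reindex_mat e A)"
proof -
  have reindex: "(\<Sum>y\<in>UNIV. g y) = (\<Sum>x\<in>UNIV. g (e x))" for g :: "_ \<Rightarrow> complex"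
    using sum.reindex_bij_betw[of e UNIV UNIV g] assms(1) by (simp add: bij_betw_def)
  have sesq_eq: "sesq (reindex_mat e A) v v = sesq A (\<chi> y. v $ inv e y) (\<chi> y. v $ inv e y)" for v
  proof -
    let ?w = "\<chi> y. v $ inv e y"
    have "sesq A ?w ?w = (\<Sum>x\<in>UNIV. \<Sum>y\<in>UNIV. cnj (?w $ e x) * A $ e x $ y * ?w $ y)"
      unfolding sesq_def by (rule reindex)
    also have "\<dots> = (\<Sum>x\<in>UNIV. \<Sum>x'\<in>UNIV. cnj (?w $ e x) * A $ e x $ e x' * ?w $ e x')"
      by (intro sum.cong refl reindex)
    also have "\<dots> = sesq (reindex_mat e A) v v"
      using assms(1) by (simp add: sesq_def reindex_mat_def bij_is_inj)
    finally show ?thesis ..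
  qed
  moreover have "hermitian_mat (reindex_mat e A)"
    using assms(2) unfolding psd_mat_def hermitian_mat_def reindex_mat_def vec_lambda_beta by blast
  ultimately show ?thesis
    using assms(2) by (simp add: psd_mat_iff_sesq)
qed

lemma ptrace1_reindex_swap: "ptrace1 (reindex_mat prod.swap A) = ptrace2 A"
  unfolding ptrace1_def ptrace2_def reindex_mat_def by simp

lemma ptrace2_reindex_swap: "ptrace2 (reindex_mat prod.swap A) = ptrace1 A"
  unfolding ptrace1_def ptrace2_def reindex_mat_def by simp

section \<open>The determinant inequalities\<close>

lemma det_eq_0_if_det_ptrace1_eq_0:
  fixes A :: "complex^('m::finite \<times> 'n::finite)^('m \<times> 'n)"
  assumes psd: "psd_mat A" and singular: "det (ptrace1 A) = 0"
  shows "det A = 0"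
proof -
  obtain v where "v \<noteq> 0" "ptrace1 A *v v = 0"
    using singular det_eq_0_iff_kernel by blast
  then have "sesq (ptrace1 A) v v = 0"
    by (simp add: sesq_eq_sum_mult_vector)
  then have "(\<Sum>i\<in>UNIV. sesq A (embed_block i v) (embed_block i v)) = 0"
    by (simp add: sesq_ptrace1)
  then have "sesq A (embed_block i v) (embed_block i v) = 0" for i
    using psd sum_nonneg_eq_0_iff[of UNIV "\<lambda>i. sesq A (embed_block i v) (embed_block i v)"]
    by (simp add: psd_mat_iff_sesq)
  then have "A *v embed_block i v = 0" for i
    using psd psd_sesq_eq_0_imp_kernel by blast
  moreover have "embed_block i v \<noteq> 0" for i
    using \<open>v \<noteq> 0\<close> by (simp add: embed_block_eq_0_iff)
  ultimately show ?thesis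
    using det_eq_0_iff_kernel by blast
qed

lemma sesq_block_diag_pos:
  fixes S :: "complex^'n::finite^'n"
  assumes "psd_mat S" "det S \<noteq> 0" "v \<noteq> 0"
  shows "0 < sesq (block_diag (\<lambda>_::'m::finite. S)) v v"
proof -
  have nonneg: "0 \<le> sesq S w w" for w
    using assms(1) by (simp add: psd_mat_iff_sesq)
  obtain i where "block v i \<noteq> 0"
    using assms(3) block_eq_0_iff by blast
  then have "S *v block v i \<noteq> 0"
    using assms(2) det_eq_0_iff_kernel by blast
  then have "sesq S (block v i) (block v i) \<noteq> 0"
    using assms(1) psd_sesq_eq_0_imp_kernel by blast
  then have "0 < sesq S (block v i) (block v i)"
    using nonneg by (simp add: order_less_le)
  then show ?thesis
    unfolding sesq_block_diag using nonneg by (intro sum_pos2) auto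
qed

lemma block_diag_inv_mult_eigenvalue_nonneg:
  fixes A :: "complex^('m::finite \<times> 'n::finite)^('m \<times> 'n)"
  assumes "psd_mat A" "psd_mat S" "det S \<noteq> 0" "S ** S' = mat 1"
    and "v \<noteq> 0" "(block_diag (\<lambda>_. S') ** A) *v v = a *s v"
  shows "0 \<le> a"
proof (rule generalized_eigenvalue_nonneg)
  show "0 \<le> sesq A v v" using assms(1) by (simp add: psd_mat_iff_sesq)
  show "0 < sesq (block_diag (\<lambda>_. S)) v v"
    using sesq_block_diag_pos assms(2,3,5) by blast
  have "A *v v = (block_diag (\<lambda>_. S) ** block_diag (\<lambda>_. S') ** A) *v v"
    using assms(4) by (simp add: block_diag_mult block_diag_mat_1)
  also have "\<dots> = a *s (block_diag (\<lambda>_. S) *v v)"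
    using assms(6) by (simp add: matrix_vector_mul_assoc[symmetric] matrix_mul_assoc vector_scalar_commute)
  finally show "A *v v = a *s (block_diag (\<lambda>_. S) *v v)" .
qed

lemma det_ptrace1_pow_ge:
  fixes A :: "complex^('m::finite \<times> 'n::finite)^('m \<times> 'n)"
  assumes psd: "psd_mat A"
  shows "real CARD('m) ^ (CARD('m) * CARD('n)) * Re (det A) \<le> Re (det (ptrace1 A)) ^ CARD('m)"
proof -
  let ?S = "ptrace1 A" and ?m = "CARD('m)" and ?n = "CARD('n)"
  obtain dS where dS: "det ?S = of_real dS" "0 \<le> dS"
    using psd_det_trace_amgm[OF psd_ptrace1[OF psd]] by metis
  show ?thesis
  proof (cases "dS = 0")
    case True
    then show ?thesis
      using det_eq_0_if_det_ptrace1_eq_0[OF psd] dS by simp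
  next
    case False
    then obtain S' where S': "?S ** S' = mat 1" "S' ** ?S = mat 1"
      using dS invertible_det_nz unfolding invertible_def by fastforce
    define M where "M = block_diag (\<lambda>_. S') ** A"
    obtain d t where dt: "det M = of_real d" "trace M = of_real t"
      "real (CARD('m \<times> 'n)) ^ CARD('m \<times> 'n) * d \<le> t ^ CARD('m \<times> 'n)"
      using nonneg_eigenvalues_amgm[of M]
        block_diag_inv_mult_eigenvalue_nonneg[OF psd psd_ptrace1[OF psd] _ S'(1)] False dS
      unfolding M_def by (metis of_real_eq_0_iff)
    have "trace M = of_nat ?n"
      by (simp add: M_def trace_block_diag_mult S'(2) trace_I)
    then have "t = real ?n" using dt(2) by (metis of_real_eq_iff of_real_of_nat_eq)
    then have "real ?n ^ (?m * ?n) * (real ?m ^ (?m * ?n) * d) \<le> real ?n ^ (?m * ?n) * 1"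
      using dt(3) by (simp add: power_mult_distrib mult_ac)
    then have d_le: "real ?m ^ (?m * ?n) * d \<le> 1" by simp
    have A_eq: "A = block_diag (\<lambda>_. ?S) ** M"
      by (simp add: M_def matrix_mul_assoc block_diag_mult S'(1) block_diag_mat_1)
    have "det A = of_real (dS ^ ?m * d)"
      by (subst A_eq) (simp add: det_mul det_block_diag dS(1) dt(1))
    then have "Re (det A) = dS ^ ?m * d" by simp
    then show ?thesis
      using mult_right_mono[OF d_le zero_le_power[OF dS(2), of ?m]] dS(1) by (simp add: mult_ac)
  qed
qed

lemma trace_pow_add_det_ptrace1_pow_ge:
  fixes A :: "complex^('m::finite \<times> 'n::finite)^('m \<times> 'n)"
  assumes psd: "psd_mat A"
  shows "of_nat CARD('m) ^ (CARD('m) * CARD('n)) * (det A + det (ptrace2 A) ^ CARD('n))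
           \<le> trace A ^ (CARD('m) * CARD('n)) + det (ptrace1 A) ^ CARD('m)"
proof -
  let ?m = "CARD('m)" and ?n = "CARD('n)"
  have psd2: "psd_mat (ptrace2 A)"
    using psd_ptrace1[OF psd_reindex_mat[OF bij_swap psd]] by (simp add: ptrace1_reindex_swap)
  obtain a where a: "det A = of_real a"
    using psd_det_trace_amgm[OF psd] by metis
  obtain p where p: "det (ptrace1 A) = of_real p"
    using psd_det_trace_amgm[OF psd_ptrace1[OF psd]] by metis
  obtain q t where q: "det (ptrace2 A) = of_real q" "trace (ptrace2 A) = of_real t" "0 \<le> q"
    and amgm: "real ?m ^ ?m * q \<le> t ^ ?m"
    using psd_det_trace_amgm[OF psd2] by metis
  have t: "trace A = of_real t"
    using q(2) trace_ptrace1 trace_reindex_mat[OF bij_swap] ptrace1_reindex_swap by metis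
  have "real ?m ^ (?m * ?n) * q ^ ?n = (real ?m ^ ?m * q) ^ ?n"
    by (simp add: power_mult power_mult_distrib)
  also have "\<dots> \<le> (t ^ ?m) ^ ?n"
    using amgm q(3) by (intro power_mono) auto
  finally have "real ?m ^ (?m * ?n) * q ^ ?n \<le> t ^ (?m * ?n)"
    by (simp add: power_mult)
  moreover have "real ?m ^ (?m * ?n) * a \<le> p ^ ?m"
    using det_ptrace1_pow_ge[OF psd] by (simp add: a p)
  ultimately have "real ?m ^ (?m * ?n) * (a + q ^ ?n) \<le> t ^ (?m * ?n) + p ^ ?m"
    by (simp add: distrib_left)
  then show ?thesis
    by (simp add: a p q t less_eq_complex_def flip: of_real_power)
qed

theorem theorem4p7:
  fixes A :: "complex^('m::finite \<times> 'n::finite)^('m \<times> 'n)"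
  assumes "psd_mat A"
  shows "trace A ^ (CARD('m) * CARD('n)) + det (ptrace1 A) ^ CARD('m)
           \<ge> of_nat CARD('m) ^ (CARD('m) * CARD('n)) * (det A + det (ptrace2 A) ^ CARD('n))
         \<and> trace A ^ (CARD('m) * CARD('n)) + det (ptrace2 A) ^ CARD('n)
           \<ge> of_nat CARD('n) ^ (CARD('m) * CARD('n)) * (det A + det (ptrace1 A) ^ CARD('m))"
proof
  show "trace A ^ (CARD('m) * CARD('n)) + det (ptrace1 A) ^ CARD('m)
      \<ge> of_nat CARD('m) ^ (CARD('m) * CARD('n)) * (det A + det (ptrace2 A) ^ CARD('n))"
    using trace_pow_add_det_ptrace1_pow_ge[OF assms] .
  let ?B = "reindex_mat prod.swap A :: complex^('n \<times> 'm)^('n \<times> 'm)"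
  have "of_nat CARD('n) ^ (CARD('n) * CARD('m)) * (det ?B + det (ptrace2 ?B) ^ CARD('m))
      \<le> trace ?B ^ (CARD('n) * CARD('m)) + det (ptrace1 ?B) ^ CARD('n)"
    using trace_pow_add_det_ptrace1_pow_ge[OF psd_reindex_mat[OF bij_swap assms]] .
  then show "trace A ^ (CARD('m) * CARD('n)) + det (ptrace2 A) ^ CARD('n)
      \<ge> of_nat CARD('n) ^ (CARD('m) * CARD('n)) * (det A + det (ptrace1 A) ^ CARD('m))"
    by (simp add: det_reindex_mat trace_reindex_mat bij_swap ptrace1_reindex_swap
        ptrace2_reindex_swap mult.commute)
qed

end
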